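(* Let $\Lambda$ be a countable index set, $\overline{a},\overline{r}$ sequences of positive reals indexed by $\Lambda$, let $0<t<p\le 2$ and $x\in\mathbb{R}^\Lambda$. Then $x\in k_t$ if and only if \[\gamma(x):=\sup_{\alpha>0}\alpha^{\frac{t-p}{p}}\|x-T_\alpha(x)\|_{\overline{\omega}_p,p}<\infty.\] More precisely, \[\gamma(x)\le 2\left(2^{p-t}-1\right)^{-1/p}\|x\|_{k_t}^{t/p}\quad\text{and}\quad \|x\|_{k_t}\le 2^{p/t}(2^t-1)^{-1/t}\gamma(x)^{p/t}.\]
   Context: For a sequence $\omega$ of positive reals and $p\in(0,\infty)$, $\|x\|_{\omega,p}=\left(\sum_{j\in\Lambda}\omega_j^p|x_j|^p\right)^{1/p}$ (possibly $+\infty$) and $\ell^p_\omega=\{x:\|x\|_{\omega,p}<\infty\}$. For $s\in(0,2]$, $(\overline{\omega}_s)_j=(\overline{a}_j^{2s-2}\overline{r}_j^{2-s})^{1/s}$. For $t\in(0,2)$, $k_t=\{x\in\mathbb{R}^\Lambda:\|x\|_{k_t}<\infty\}$ where $\|x\|_{k_t}=\sup_{\alpha>0}\alpha\left(\sum_{j\in\Lambda}\overline{a}_j^{-2}\overline{r}_j^2\mathbf{1}_{\{\overline{a}_j^{-2}\overline{r}_j\alpha<|x_j|\}}\right)^{1/t}$. For $\alpha>0$ the thresholding map $T_\alpha:\mathbb{R}^\Lambda\to\mathbb{R}^\Lambda$ is $T_\alpha(x)_j=x_j$ if $\overline{a}_j^{-2}\overline{r}_j\alpha<|x_j|$ and $T_\alpha(x)_j=0$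 otherwise. *)

theory Defs
  imports "HOL-Analysis.Analysis"
begin

text \<open>Index set \<Lambda> is a countable set of indices of type 'i; sequences are functions
  'i \<Rightarrow> real (only their values on \<Lambda> matter).\<close>

text \<open>Real power of an extended nonnegative real, for positive exponents: \<infinity>^q = \<infinity>.\<close>
definition epowr :: "ennreal \<Rightarrow> real \<Rightarrow> ennreal" where
  "epowr s q = (if s = \<infinity> then \<infinity> else ennreal (enn2real s powr q))"

definition wnorm :: "'i set \<Rightarrow> ('i \<Rightarrow> real) \<Rightarrow> real \<Rightarrow> ('i \<Rightarrow> real) \<Rightarrow> ennreal" where
  "wnorm \<Lambda> \<omega> p x = epowr (\<Sum>\<^sub>\<infinity> j\<in>\<Lambda>. ennreal ((\<omega> j) powr p * \<bar>x j\<bar> powr p)) (1 / p)"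

definition lp_w :: "'i set \<Rightarrow> ('i \<Rightarrow> real) \<Rightarrow> real \<Rightarrow> ('i \<Rightarrow> real) set" where
  "lp_w \<Lambda> \<omega> p = {x. wnorm \<Lambda> \<omega> p x < \<infinity>}"

definition omega_bar :: "('i \<Rightarrow> real) \<Rightarrow> ('i \<Rightarrow> real) \<Rightarrow> real \<Rightarrow> 'i \<Rightarrow> real" where
  "omega_bar a r s j = ((a j) powr (2 * s - 2) * (r j) powr (2 - s)) powr (1 / s)"

definition kt_norm :: "'i set \<Rightarrow> ('i \<Rightarrow> real) \<Rightarrow> ('i \<Rightarrow> real) \<Rightarrow> real \<Rightarrow> ('i \<Rightarrow> real) \<Rightarrow> ennreal" where
  "kt_norm \<Lambda> a r t x = (SUP \<alpha>\<in>{0<..}. ennreal \<alpha> *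
      epowr (\<Sum>\<^sub>\<infinity> j\<in>\<Lambda>. ennreal ((a j) powr (-2) * (r j)^2 *
               (if (a j) powr (-2) * r j * \<alpha> < \<bar>x j\<bar> then 1 else 0))) (1 / t))"

definition k_space :: "'i set \<Rightarrow> ('i \<Rightarrow> real) \<Rightarrow> ('i \<Rightarrow> real) \<Rightarrow> real \<Rightarrow> ('i \<Rightarrow> real) set" where
  "k_space \<Lambda> a r t = {x. kt_norm \<Lambda> a r t x < \<infinity>}"

definition thresh :: "('i \<Rightarrow> real) \<Rightarrow> ('i \<Rightarrow> real) \<Rightarrow> real \<Rightarrow> ('i \<Rightarrow> real) \<Rightarrow> 'i \<Rightarrow> real" where
  "thresh a r \<alpha> x j = (if (a j) powr (-2) * r j * \<alpha> < \<bar>x j\<bar> then x j else 0)"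

end

theory Submission
  imports Defs
begin

text \<open>Normalise y_j = |x_j| / (a_j^-2 r_j) and weigh coordinate j by w_j = a_j^-2 r_j^2.
  Then T_\<alpha> keeps exactly the coordinates with y_j > \<alpha>, the k_t-norm of x is
  sup_\<beta> \<beta> N(\<beta>)^(1/t) for the tail mass N(\<beta>) = (sum of w_j over y_j > \<beta>), and
  the p-th power of the weighted norm of x - T_\<alpha> x is the truncated moment
  E(\<alpha>) = (sum of w_j y_j^p over y_j \<le> \<alpha>).
  Cutting (0, \<alpha>] resp. (\<beta>, \<infinity>) into dyadic shells gives
  E(\<alpha>) \<le> \<Sum>_k (\<alpha> 2^-k)^p N(\<alpha> 2^-(k+1)) and N(\<beta>) \<le> \<Sum>_k (\<beta> 2^k)^-p E(\<beta> 2^(k+1)).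
  A power bound N(\<beta>) \<le> K^t \<beta>^-t, resp. E(\<alpha>) \<le> \<gamma>^p \<alpha>^(p-t), turns the right-hand side
  into a geometric series with ratio 2^(t-p), resp. 2^-t, whose sum gives the constants.\<close>

lemma infsum_cmult_left_ennreal:
  fixes f :: "'i \<Rightarrow> ennreal"
  shows "(\<Sum>\<^sub>\<infinity>j\<in>A. c * f j) = c * (\<Sum>\<^sub>\<infinity>j\<in>A. f j)"
  by (simp add: nonneg_infsum_complete sum_distrib_left SUP_mult_left_ennreal)

lemma sum_infsum_commute_ennreal:
  fixes G :: "'i \<Rightarrow> 'k \<Rightarrow> ennreal"
  assumes "finite F"
  shows "(\<Sum>j\<in>F. \<Sum>\<^sub>\<infinity>k\<in>B. G j k) = (\<Sum>\<^sub>\<infinity>k\<in>B. \<Sum>j\<in>F. G j k)"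
  using assms by (induction F rule: finite_induct) (simp_all add: infsum_add nonneg_summable_on_complete)

lemma sum_le_infsum_ennreal:
  fixes f :: "'i \<Rightarrow> ennreal"
  assumes "finite F" "F \<subseteq> A"
  shows "(\<Sum>j\<in>F. f j) \<le> (\<Sum>\<^sub>\<infinity>j\<in>A. f j)"
proof -
  have "(\<Sum>\<^sub>\<infinity>j\<in>F. f j) \<le> (\<Sum>\<^sub>\<infinity>j\<in>A. f j)"
    by (rule infsum_mono_neutral) (use assms in \<open>auto intro: nonneg_summable_on_complete\<close>)
  then show ?thesis using assms by simp
qed

lemma member_le_infsum_ennreal:
  fixes f :: "'i \<Rightarrow> ennreal"
  assumes "k \<in> A"
  shows "f k \<le> (\<Sum>\<^sub>\<infinity>j\<in>A. f j)"
  using sum_le_infsum_ennreal[of "{k}" A f] assms by simp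

lemma infsum_swap_le_ennreal:
  fixes G :: "'i \<Rightarrow> 'k \<Rightarrow> ennreal"
  shows "(\<Sum>\<^sub>\<infinity>j\<in>A. \<Sum>\<^sub>\<infinity>k\<in>B. G j k) \<le> (\<Sum>\<^sub>\<infinity>k\<in>B. \<Sum>\<^sub>\<infinity>j\<in>A. G j k)"
proof (rule infsum_le_finite_sums)
  fix F assume F: "finite F" "F \<subseteq> A"
  have "(\<Sum>j\<in>F. \<Sum>\<^sub>\<infinity>k\<in>B. G j k) = (\<Sum>\<^sub>\<infinity>k\<in>B. \<Sum>j\<in>F. G j k)"
    by (rule sum_infsum_commute_ennreal[OF F(1)])
  also have "\<dots> \<le> (\<Sum>\<^sub>\<infinity>k\<in>B. \<Sum>\<^sub>\<infinity>j\<in>A. G j k)"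
    by (rule infsum_mono) (auto intro: nonneg_summable_on_complete sum_le_infsum_ennreal[OF F])
  finally show "(\<Sum>j\<in>F. \<Sum>\<^sub>\<infinity>k\<in>B. G j k) \<le> (\<Sum>\<^sub>\<infinity>k\<in>B. \<Sum>\<^sub>\<infinity>j\<in>A. G j k)" .
qed (simp add: nonneg_summable_on_complete)

lemma infsum_geometric_ennreal:
  fixes c q :: real
  assumes "0 \<le> c" "0 \<le> q" "q < 1"
  shows "(\<Sum>\<^sub>\<infinity>k. ennreal (c * q ^ k)) = ennreal (c / (1 - q))"
proof -
  have "(\<lambda>k. c * q ^ k) sums (c * (1 / (1 - q)))"
    using assms by (intro sums_mult geometric_sums) auto
  then have "((\<lambda>k. c * q ^ k) has_sum (c / (1 - q))) UNIV"
    using assms by (intro sums_nonneg_imp_has_sum) auto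
  then have "((ennreal \<circ> (\<lambda>k. c * q ^ k)) has_sum ennreal (c / (1 - q))) UNIV"
    by (rule has_sum_comm_additive_general[rotated 2])
       (auto simp: sum_ennreal assms intro!: tendsto_ennrealI)
  then show ?thesis by (simp add: infsumI o_def)
qed

lemma exists_dyadic_scale:
  fixes s L :: real
  assumes "0 < s" "s \<le> L"
  obtains k :: nat where "2 ^ k * s \<le> L" "L < 2 ^ Suc k * s"
proof -
  define m where "m = nat \<lfloor>L / s\<rfloor>"
  have "1 \<le> m" using assms unfolding m_def by (simp add: le_nat_floor)
  then obtain k where k: "2 ^ k \<le> m" "m < 2 ^ (k + 1)"
    using ex_power_ivl1[of 2 m] by auto
  have "2 ^ k \<le> L / s"
    using k(1) assms unfolding m_def by (simp add: le_nat_floor le_floor_iff)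
  moreover have "L / s < 2 ^ Suc k"
    using k(2) assms unfolding m_def by (simp add: nat_less_iff floor_less_iff)
  ultimately show ?thesis
    using that assms by (simp add: field_simps)
qed

lemma epowr_ennreal: "0 \<le> u \<Longrightarrow> epowr (ennreal u) q = ennreal (u powr q)"
  by (simp add: epowr_def)

lemma less_top_if_le_mult_epowr:
  assumes "u \<le> ennreal c * epowr v q" "v < \<infinity>"
  shows "u < \<infinity>"
proof -
  have "ennreal c * epowr v q < \<infinity>"
    using assms(2) by (simp add: epowr_def ennreal_mult_less_top)
  with assms(1) show ?thesis by (rule le_less_trans)
qed

text \<open>Both the k_t-norm (e = 1, s = t) and \<gamma> (e = (t-p)/p, s = p) have this shape.\<close>

definition weighted_root_sup :: "real \<Rightarrow> real \<Rightarrow> (real \<Rightarrow> ennreal) \<Rightarrow> ennreal" where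
  "weighted_root_sup e s f = (SUP \<alpha>\<in>{0<..}. ennreal (\<alpha> powr e) * epowr (f \<alpha>) (1 / s))"

lemma weighted_root_sup_le:
  assumes "0 < s" "0 \<le> M" "\<And>\<alpha>. 0 < \<alpha> \<Longrightarrow> f \<alpha> \<le> ennreal (M * \<alpha> powr (- e * s))"
  shows "weighted_root_sup e s f \<le> ennreal (M powr (1 / s))"
  unfolding weighted_root_sup_def
proof (rule SUP_least)
  fix \<alpha> :: real assume "\<alpha> \<in> {0<..}"
  then have \<alpha>: "0 < \<alpha>" by simp
  have "0 \<le> M * \<alpha> powr (- e * s)" using assms(2) by simp
  then obtain u where u: "f \<alpha> = ennreal u" "0 \<le> u" "u \<le> M * \<alpha> powr (- e * s)"
    using assms(3)[OF \<alpha>] by (cases "f \<alpha>") (auto simp: top_unique)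
  have "\<alpha> powr e * u powr (1 / s) \<le> \<alpha> powr e * (M * \<alpha> powr (- e * s)) powr (1 / s)"
    using u assms(1) by (intro mult_left_mono powr_mono2) auto
  also have "\<dots> = M powr (1 / s)"
    using \<alpha> assms(1,2) by (simp add: powr_mult powr_powr powr_add[symmetric])
  finally show "ennreal (\<alpha> powr e) * epowr (f \<alpha>) (1 / s) \<le> ennreal (M powr (1 / s))"
    using u by (simp add: epowr_ennreal ennreal_mult[symmetric])
qed

lemma weighted_root_sup_le_imp_le:
  assumes "0 < s" "0 \<le> B" "weighted_root_sup e s f \<le> ennreal B" "0 < \<alpha>"
  shows "f \<alpha> \<le> ennreal (B powr s * \<alpha> powr (- e * s))"
proof -
  have le: "ennreal (\<alpha> powr e) * epowr (f \<alpha>) (1 / s) \<le> ennreal B"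
    using assms(3,4) unfolding weighted_root_sup_def by (meson SUP_upper greaterThan_iff order_trans)
  have "f \<alpha> \<noteq> \<infinity>"
  proof
    assume "f \<alpha> = \<infinity>"
    then show False using le assms(4) by (simp add: epowr_def ennreal_mult_top top_unique)
  qed
  then obtain u where u: "f \<alpha> = ennreal u" "0 \<le> u" by (cases "f \<alpha>") auto
  have "\<alpha> powr e * u powr (1 / s) \<le> B"
    using le u assms(2) by (simp add: epowr_ennreal ennreal_mult[symmetric])
  then have "u powr (1 / s) \<le> B * \<alpha> powr (- e)"
    using assms(4) by (simp add: powr_minus field_simps)
  then have "(u powr (1 / s)) powr s \<le> (B * \<alpha> powr (- e)) powr s"
    using assms(1) by (intro powr_mono2) auto
  then show ?thesis
    using u assms by (simp add: powr_powr powr_mult)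
qed

definition tail_mass :: "'i set \<Rightarrow> ('i \<Rightarrow> real) \<Rightarrow> ('i \<Rightarrow> real) \<Rightarrow> real \<Rightarrow> ennreal" where
  "tail_mass A w y \<beta> = (\<Sum>\<^sub>\<infinity>j\<in>A. ennreal (if \<beta> < y j then w j else 0))"

definition truncated_moment ::
    "'i set \<Rightarrow> ('i \<Rightarrow> real) \<Rightarrow> ('i \<Rightarrow> real) \<Rightarrow> real \<Rightarrow> real \<Rightarrow> ennreal" where
  "truncated_moment A w y p \<alpha> = (\<Sum>\<^sub>\<infinity>j\<in>A. ennreal (if y j \<le> \<alpha> then w j * y j powr p else 0))"

lemma truncated_moment_le_dyadic_tail_masses:
  assumes "0 < \<alpha>" "0 \<le> p" "\<And>j. j \<in> A \<Longrightarrow> 0 \<le> w j" "\<And>j. j \<in> A \<Longrightarrow> 0 \<le> y j"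
  shows "truncated_moment A w y p \<alpha>
    \<le> (\<Sum>\<^sub>\<infinity>k. ennreal ((\<alpha> / 2 ^ k) powr p) * tail_mass A w y (\<alpha> / 2 ^ Suc k))"
proof -
  let ?term = "\<lambda>j k. ennreal ((\<alpha> / 2 ^ k) powr p) * ennreal (if \<alpha> / 2 ^ Suc k < y j then w j else 0)"
  have "truncated_moment A w y p \<alpha> \<le> (\<Sum>\<^sub>\<infinity>j\<in>A. \<Sum>\<^sub>\<infinity>k. ?term j k)"
    unfolding truncated_moment_def
  proof (rule infsum_mono)
    fix j assume j: "j \<in> A"
    show "ennreal (if y j \<le> \<alpha> then w j * y j powr p else 0) \<le> (\<Sum>\<^sub>\<infinity>k. ?term j k)"
    proof (cases "0 < y j \<and> y j \<le> \<alpha>")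
      case True
      then obtain k where k: "2 ^ k * y j \<le> \<alpha>" "\<alpha> < 2 ^ Suc k * y j"
        using exists_dyadic_scale[of "y j" \<alpha>] by blast
      have "y j \<le> \<alpha> / 2 ^ k" "\<alpha> / 2 ^ Suc k < y j"
        using k by (simp_all add: field_simps)
      then have "w j * y j powr p \<le> (\<alpha> / 2 ^ k) powr p * w j"
        using assms(2) assms(3)[OF j] True by (simp add: powr_mono2 mult.commute mult_left_mono)
      then have "ennreal (if y j \<le> \<alpha> then w j * y j powr p else 0) \<le> ?term j k"
        using True \<open>\<alpha> / 2 ^ Suc k < y j\<close> assms(3)[OF j] by (simp add: ennreal_mult[symmetric])
      also have "\<dots> \<le> (\<Sum>\<^sub>\<infinity>k. ?term j k)"
        by (rule member_le_infsum_ennreal) simp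
      finally show ?thesis .
    next
      case False
      then show ?thesis using assms(4)[OF j] by auto
    qed
  qed (auto intro: nonneg_summable_on_complete)
  also have "\<dots> \<le> (\<Sum>\<^sub>\<infinity>k. \<Sum>\<^sub>\<infinity>j\<in>A. ?term j k)"
    by (rule infsum_swap_le_ennreal)
  also have "\<dots> = (\<Sum>\<^sub>\<infinity>k. ennreal ((\<alpha> / 2 ^ k) powr p) * tail_mass A w y (\<alpha> / 2 ^ Suc k))"
    unfolding tail_mass_def by (simp add: infsum_cmult_left_ennreal)
  finally show ?thesis .
qed

lemma tail_mass_le_dyadic_truncated_moments:
  assumes "0 < \<beta>" "0 \<le> p" "\<And>j. j \<in> A \<Longrightarrow> 0 \<le> w j"
  shows "tail_mass A w y \<beta>
    \<le> (\<Sum>\<^sub>\<infinity>k. ennreal ((\<beta> * 2 ^ k) powr (- p)) * truncated_moment A w y p (\<beta> * 2 ^ Suc k))"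
proof -
  let ?term = "\<lambda>j k. ennreal ((\<beta> * 2 ^ k) powr (- p))
    * ennreal (if y j \<le> \<beta> * 2 ^ Suc k then w j * y j powr p else 0)"
  have "tail_mass A w y \<beta> \<le> (\<Sum>\<^sub>\<infinity>j\<in>A. \<Sum>\<^sub>\<infinity>k. ?term j k)"
    unfolding tail_mass_def
  proof (rule infsum_mono)
    fix j assume j: "j \<in> A"
    show "ennreal (if \<beta> < y j then w j else 0) \<le> (\<Sum>\<^sub>\<infinity>k. ?term j k)"
    proof (cases "\<beta> < y j")
      case True
      then obtain k where k: "2 ^ k * \<beta> \<le> y j" "y j < 2 ^ Suc k * \<beta>"
        using exists_dyadic_scale[of \<beta> "y j"] assms(1) by auto
      have "(\<beta> * 2 ^ k) powr p \<le> y j powr p"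
        using k assms(1,2) by (intro powr_mono2) (auto simp: mult.commute)
      then have "w j \<le> (\<beta> * 2 ^ k) powr (- p) * (w j * y j powr p)"
        using assms(1) assms(3)[OF j] by (simp add: powr_minus field_simps mult_left_mono)
      then have "ennreal (if \<beta> < y j then w j else 0) \<le> ?term j k"
        using True k assms(3)[OF j] by (simp add: ennreal_mult[symmetric] mult.commute)
      also have "\<dots> \<le> (\<Sum>\<^sub>\<infinity>k. ?term j k)"
        by (rule member_le_infsum_ennreal) simp
      finally show ?thesis .
    qed simp
  qed (auto intro: nonneg_summable_on_complete)
  also have "\<dots> \<le> (\<Sum>\<^sub>\<infinity>k. \<Sum>\<^sub>\<infinity>j\<in>A. ?term j k)"
    by (rule infsum_swap_le_ennreal)
  also have "\<dots> = (\<Sum>\<^sub>\<infinity>k. ennreal ((\<beta> * 2 ^ k) powr (- p)) * truncated_moment A w y p (\<beta> * 2 ^ Suc k))"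
    unfolding truncated_moment_def by (simp add: infsum_cmult_left_ennreal)
  finally show ?thesis .
qed

lemma truncated_moment_le_of_tail_mass_le:
  assumes "0 \<le> p" "t < p" "0 \<le> M" "\<And>j. j \<in> A \<Longrightarrow> 0 \<le> w j" "\<And>j. j \<in> A \<Longrightarrow> 0 \<le> y j"
    and tail: "\<And>\<beta>. 0 < \<beta> \<Longrightarrow> tail_mass A w y \<beta> \<le> ennreal (M * \<beta> powr (- t))"
    and "0 < \<alpha>"
  shows "truncated_moment A w y p \<alpha> \<le> ennreal (M * (2 powr p / (2 powr (p - t) - 1)) * \<alpha> powr (p - t))"
proof -
  define c where "c = M * 2 powr t * \<alpha> powr (p - t)"
  have term_eq: "(\<alpha> / 2 ^ k) powr p * (M * (\<alpha> / 2 ^ Suc k) powr (- t)) = c * (2 powr (t - p)) ^ k"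
    for k :: nat
    using \<open>0 < \<alpha>\<close> unfolding c_def
    by (simp add: powr_divide powr_mult powr_realpow[symmetric] powr_powr powr_diff powr_add
        powr_minus field_simps)
  have "truncated_moment A w y p \<alpha>
      \<le> (\<Sum>\<^sub>\<infinity>k. ennreal ((\<alpha> / 2 ^ k) powr p) * tail_mass A w y (\<alpha> / 2 ^ Suc k))"
    using assms by (intro truncated_moment_le_dyadic_tail_masses) auto
  also have "\<dots> \<le> (\<Sum>\<^sub>\<infinity>k. ennreal (c * (2 powr (t - p)) ^ k))"
  proof (rule infsum_mono)
    fix k :: nat
    have "ennreal ((\<alpha> / 2 ^ k) powr p) * tail_mass A w y (\<alpha> / 2 ^ Suc k)
        \<le> ennreal ((\<alpha> / 2 ^ k) powr p) * ennreal (M * (\<alpha> / 2 ^ Suc k) powr (- t))"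
      using \<open>0 < \<alpha>\<close> by (intro mult_left_mono tail) auto
    also have "\<dots> = ennreal (c * (2 powr (t - p)) ^ k)"
      using \<open>0 \<le> M\<close> by (simp add: term_eq[symmetric] ennreal_mult'[symmetric])
    finally show "ennreal ((\<alpha> / 2 ^ k) powr p) * tail_mass A w y (\<alpha> / 2 ^ Suc k)
        \<le> ennreal (c * (2 powr (t - p)) ^ k)" .
  qed (auto intro: nonneg_summable_on_complete)
  also have "\<dots> = ennreal (c / (1 - 2 powr (t - p)))"
    using assms(2,3) unfolding c_def by (intro infsum_geometric_ennreal) (auto intro: powr_less_one)
  also have "c / (1 - 2 powr (t - p)) = M * (2 powr p / (2 powr (p - t) - 1)) * \<alpha> powr (p - t)"
    using assms(2) unfolding c_def by (simp add: powr_diff field_simps)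
  finally show ?thesis .
qed

lemma tail_mass_le_of_truncated_moment_le:
  assumes "0 \<le> p" "0 < t" "0 \<le> M" "\<And>j. j \<in> A \<Longrightarrow> 0 \<le> w j"
    and moment: "\<And>\<alpha>. 0 < \<alpha> \<Longrightarrow> truncated_moment A w y p \<alpha> \<le> ennreal (M * \<alpha> powr (p - t))"
    and "0 < \<beta>"
  shows "tail_mass A w y \<beta> \<le> ennreal (M * (2 powr p / (2 powr t - 1)) * \<beta> powr (- t))"
proof -
  define c where "c = M * 2 powr (p - t) * \<beta> powr (- t)"
  have term_eq: "(\<beta> * 2 ^ k) powr (- p) * (M * (\<beta> * 2 ^ Suc k) powr (p - t)) = c * (2 powr (- t)) ^ k"
    for k :: nat
    using \<open>0 < \<beta>\<close> unfolding c_def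
    by (simp add: powr_mult powr_realpow[symmetric] powr_powr powr_diff powr_add
        powr_minus field_simps)
  have "tail_mass A w y \<beta>
      \<le> (\<Sum>\<^sub>\<infinity>k. ennreal ((\<beta> * 2 ^ k) powr (- p)) * truncated_moment A w y p (\<beta> * 2 ^ Suc k))"
    using assms by (intro tail_mass_le_dyadic_truncated_moments) auto
  also have "\<dots> \<le> (\<Sum>\<^sub>\<infinity>k. ennreal (c * (2 powr (- t)) ^ k))"
  proof (rule infsum_mono)
    fix k :: nat
    have "ennreal ((\<beta> * 2 ^ k) powr (- p)) * truncated_moment A w y p (\<beta> * 2 ^ Suc k)
        \<le> ennreal ((\<beta> * 2 ^ k) powr (- p)) * ennreal (M * (\<beta> * 2 ^ Suc k) powr (p - t))"
      using \<open>0 < \<beta>\<close> by (intro mult_left_mono moment) auto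
    also have "\<dots> = ennreal (c * (2 powr (- t)) ^ k)"
      using \<open>0 \<le> M\<close> by (simp add: term_eq[symmetric] ennreal_mult'[symmetric])
    finally show "ennreal ((\<beta> * 2 ^ k) powr (- p)) * truncated_moment A w y p (\<beta> * 2 ^ Suc k)
        \<le> ennreal (c * (2 powr (- t)) ^ k)" .
  qed (auto intro: nonneg_summable_on_complete)
  also have "\<dots> = ennreal (c / (1 - 2 powr (- t)))"
    using assms(2,3) unfolding c_def by (intro infsum_geometric_ennreal) (auto intro: powr_less_one)
  also have "c / (1 - 2 powr (- t)) = M * (2 powr p / (2 powr t - 1)) * \<beta> powr (- t)"
    using assms(2) unfolding c_def by (simp add: powr_diff powr_minus field_simps)
  finally show ?thesis .
qed

lemma truncated_moment_sup_le_tail_mass_sup: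
  assumes "0 < t" "t < p" "\<And>j. j \<in> A \<Longrightarrow> 0 \<le> w j" "\<And>j. j \<in> A \<Longrightarrow> 0 \<le> y j"
  shows "weighted_root_sup ((t - p) / p) p (truncated_moment A w y p)
    \<le> ennreal (2 * (2 powr (p - t) - 1) powr (-1 / p))
      * epowr (weighted_root_sup 1 t (tail_mass A w y)) (t / p)"
proof (cases "weighted_root_sup 1 t (tail_mass A w y)")
  case (real K)
  define D where "D = 2 powr p / (2 powr (p - t) - 1)"
  have "0 < p" "0 < D" using assms(1,2) by (simp_all add: D_def)
  have tail: "tail_mass A w y \<beta> \<le> ennreal (K powr t * \<beta> powr (- t))" if "0 < \<beta>" for \<beta>
    using weighted_root_sup_le_imp_le[of t K 1 "tail_mass A w y" \<beta>] real that assms(1) by simp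
  have "truncated_moment A w y p \<alpha> \<le> ennreal (K powr t * D * \<alpha> powr (- ((t - p) / p) * p))"
    if "0 < \<alpha>" for \<alpha>
    using truncated_moment_le_of_tail_mass_le[OF _ assms(2) _ assms(3,4) tail that] \<open>0 < p\<close>
    by (simp add: D_def)
  then have "weighted_root_sup ((t - p) / p) p (truncated_moment A w y p)
      \<le> ennreal ((K powr t * D) powr (1 / p))"
    using \<open>0 < p\<close> \<open>0 < D\<close> by (intro weighted_root_sup_le) auto
  also have "(K powr t * D) powr (1 / p) = 2 * (2 powr (p - t) - 1) powr (-1 / p) * K powr (t / p)"
    using \<open>0 < p\<close> assms(2) real(1) unfolding D_def
    by (simp add: powr_mult powr_divide powr_powr powr_minus_divide divide_simps)
  finally show ?thesis
    using real assms(2) by (simp add: epowr_ennreal ennreal_mult)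
next
  case top
  then show ?thesis using assms(2) by (simp add: epowr_def ennreal_mult_top)
qed

lemma tail_mass_sup_le_truncated_moment_sup:
  assumes "0 < t" "t < p" "\<And>j. j \<in> A \<Longrightarrow> 0 \<le> w j"
  shows "weighted_root_sup 1 t (tail_mass A w y)
    \<le> ennreal (2 powr (p / t) * (2 powr t - 1) powr (-1 / t))
      * epowr (weighted_root_sup ((t - p) / p) p (truncated_moment A w y p)) (p / t)"
proof (cases "weighted_root_sup ((t - p) / p) p (truncated_moment A w y p)")
  case (real G)
  define D where "D = 2 powr p / (2 powr t - 1)"
  have "0 < p" "0 < D" using assms(1,2) by (simp_all add: D_def)
  have moment: "truncated_moment A w y p \<alpha> \<le> ennreal (G powr p * \<alpha> powr (p - t))" if "0 < \<alpha>" for \<alpha>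
    using weighted_root_sup_le_imp_le[of p G "(t - p) / p" "truncated_moment A w y p" \<alpha>]
      real that \<open>0 < p\<close> by simp
  have "tail_mass A w y \<beta> \<le> ennreal (G powr p * D * \<beta> powr (- 1 * t))" if "0 < \<beta>" for \<beta>
    using tail_mass_le_of_truncated_moment_le[OF _ assms(1) _ assms(3) moment that] \<open>0 < p\<close>
    by (simp add: D_def)
  then have "weighted_root_sup 1 t (tail_mass A w y) \<le> ennreal ((G powr p * D) powr (1 / t))"
    using assms(1) \<open>0 < D\<close> by (intro weighted_root_sup_le) auto
  also have "(G powr p * D) powr (1 / t) = 2 powr (p / t) * (2 powr t - 1) powr (-1 / t) * G powr (p / t)"
    using assms(1) real(1) unfolding D_def
    by (simp add: powr_mult powr_divide powr_powr powr_minus_divide divide_simps)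
  finally show ?thesis
    using real assms(1) by (simp add: epowr_ennreal ennreal_mult)
next
  case top
  then show ?thesis using assms(1) by (simp add: epowr_def ennreal_mult_top)
qed

definition kt_weight :: "('i \<Rightarrow> real) \<Rightarrow> ('i \<Rightarrow> real) \<Rightarrow> 'i \<Rightarrow> real" where
  "kt_weight a r j = a j powr (-2) * (r j)\<^sup>2"

definition kt_level :: "('i \<Rightarrow> real) \<Rightarrow> ('i \<Rightarrow> real) \<Rightarrow> ('i \<Rightarrow> real) \<Rightarrow> 'i \<Rightarrow> real" where
  "kt_level a r x j = \<bar>x j\<bar> / (a j powr (-2) * r j)"

lemma kt_norm_eq_weighted_root_sup:
  assumes "\<And>j. j \<in> \<Lambda> \<Longrightarrow> 0 < a j" "\<And>j. j \<in> \<Lambda> \<Longrightarrow> 0 < r j"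
  shows "kt_norm \<Lambda> a r t x = weighted_root_sup 1 t (tail_mass \<Lambda> (kt_weight a r) (kt_level a r x))"
  unfolding kt_norm_def weighted_root_sup_def tail_mass_def
proof (rule SUP_cong[OF refl])
  fix \<alpha> :: real assume "\<alpha> \<in> {0<..}"
  moreover have "(\<Sum>\<^sub>\<infinity>j\<in>\<Lambda>. ennreal (a j powr (-2) * (r j)\<^sup>2
        * (if a j powr (-2) * r j * \<alpha> < \<bar>x j\<bar> then 1 else 0)))
      = (\<Sum>\<^sub>\<infinity>j\<in>\<Lambda>. ennreal (if \<alpha> < kt_level a r x j then kt_weight a r j else 0))"
  proof (rule infsum_cong)
    fix j assume j: "j \<in> \<Lambda>"
    have "0 < a j powr (-2) * r j" using assms(1,2)[OF j] by simp
    then show "ennreal (a j powr (-2) * (r j)\<^sup>2 * (if a j powr (-2) * r j * \<alpha> < \<bar>x j\<bar> then 1 else 0))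
        = ennreal (if \<alpha> < kt_level a r x j then kt_weight a r j else 0)"
      by (simp add: kt_weight_def kt_level_def pos_less_divide_eq ac_simps)
  qed
  ultimately show "ennreal \<alpha> * epowr (\<Sum>\<^sub>\<infinity>j\<in>\<Lambda>. ennreal (a j powr (-2) * (r j)\<^sup>2
        * (if a j powr (-2) * r j * \<alpha> < \<bar>x j\<bar> then 1 else 0))) (1 / t)
      = ennreal (\<alpha> powr 1) * epowr (\<Sum>\<^sub>\<infinity>j\<in>\<Lambda>. ennreal (if \<alpha> < kt_level a r x j
        then kt_weight a r j else 0)) (1 / t)"
    by simp
qed

lemma omega_bar_powr_mult_abs_powr:
  assumes "0 < a j" "0 < r j" "0 < p"
  shows "omega_bar a r p j powr p * \<bar>v\<bar> powr p
    = kt_weight a r j * (\<bar>v\<bar> / (a j powr (-2) * r j)) powr p"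
proof -
  have "(\<bar>v\<bar> / (a j powr (-2) * r j)) powr p = \<bar>v\<bar> powr p / (a j powr (-2 * p) * r j powr p)"
    using assms by (simp only: powr_divide powr_mult powr_powr abs_ge_zero powr_nonneg_iff
      mult_nonneg_nonneg less_imp_le powr_ge_zero)
  moreover have "a j powr (2 * p - 2) = a j powr (-2) / a j powr (-2 * p)"
    by (simp only: powr_diff[symmetric]) simp
  moreover have "r j powr (2 - p) = (r j)\<^sup>2 / r j powr p"
    using assms by (simp add: powr_diff)
  ultimately show ?thesis
    using assms unfolding omega_bar_def kt_weight_def by (simp add: powr_powr)
qed

lemma residual_wnorm_eq_truncated_moment:
  assumes "\<And>j. j \<in> \<Lambda> \<Longrightarrow> 0 < a j" "\<And>j. j \<in> \<Lambda> \<Longrightarrow> 0 < r j" "0 < p"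
  shows "wnorm \<Lambda> (omega_bar a r p) p (\<lambda>j. x j - thresh a r \<alpha> x j)
    = epowr (truncated_moment \<Lambda> (kt_weight a r) (kt_level a r x) p \<alpha>) (1 / p)"
  unfolding wnorm_def truncated_moment_def
proof (intro arg_cong2[where f = epowr] refl infsum_cong)
  fix j assume j: "j \<in> \<Lambda>"
  have "0 < a j powr (-2) * r j" using assms(1,2)[OF j] by simp
  then show "ennreal (omega_bar a r p j powr p * \<bar>x j - thresh a r \<alpha> x j\<bar> powr p)
      = ennreal (if kt_level a r x j \<le> \<alpha> then kt_weight a r j * kt_level a r x j powr p else 0)"
    using omega_bar_powr_mult_abs_powr[where a = a and r = r and j = j and v = "x j"]
      assms(1,2)[OF j] assms(3)
    by (auto simp: thresh_def kt_level_def pos_divide_le_eq mult.commute not_less)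
qed

theorem lemma3p6:
  fixes \<Lambda> :: "'i set" and a r x :: "'i \<Rightarrow> real" and t p :: real
  assumes "countable \<Lambda>"
    and "\<And>j. j \<in> \<Lambda> \<Longrightarrow> a j > 0"
    and "\<And>j. j \<in> \<Lambda> \<Longrightarrow> r j > 0"
    and "0 < t" and "t < p" and "p \<le> 2"
  defines "\<gamma> \<equiv> (SUP \<alpha>\<in>{0<..}. ennreal (\<alpha> powr ((t - p) / p)) *
                   wnorm \<Lambda> (omega_bar a r p) p (\<lambda>j. x j - thresh a r \<alpha> x j))"
  shows "(x \<in> k_space \<Lambda> a r t \<longleftrightarrow> \<gamma> < \<infinity>)
    \<and> \<gamma> \<le> ennreal (2 * (2 powr (p - t) - 1) powr (-1 / p)) * epowr (kt_norm \<Lambda> a r t x) (t / p)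
    \<and> kt_norm \<Lambda> a r t x \<le> ennreal (2 powr (p / t) * (2 powr t - 1) powr (-1 / t)) * epowr \<gamma> (p / t)"
proof -
  \<comment> \<open>Neither \<open>countable \<Lambda>\<close> (\<open>ennreal\<close>-valued sums exist over any index set)
    nor \<open>p \<le> 2\<close> is used.\<close>
  let ?w = "kt_weight a r" and ?y = "kt_level a r x"
  have "0 < p" using assms(4,5) by simp
  have nonneg: "0 \<le> ?w j" "0 \<le> ?y j" if "j \<in> \<Lambda>" for j
    using assms(2,3)[OF that] by (simp_all add: kt_weight_def kt_level_def)
  have kt: "kt_norm \<Lambda> a r t x = weighted_root_sup 1 t (tail_mass \<Lambda> ?w ?y)"
    using assms(2,3) by (rule kt_norm_eq_weighted_root_sup)
  have \<gamma>: "\<gamma> = weighted_root_sup ((t - p) / p) p (truncated_moment \<Lambda> ?w ?y p)"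
    unfolding \<gamma>_def weighted_root_sup_def
    using residual_wnorm_eq_truncated_moment[of \<Lambda> a r p x] assms(2,3) \<open>0 < p\<close> by simp
  have upper: "\<gamma> \<le> ennreal (2 * (2 powr (p - t) - 1) powr (-1 / p)) * epowr (kt_norm \<Lambda> a r t x) (t / p)"
    unfolding kt \<gamma> using assms(4,5) nonneg by (rule truncated_moment_sup_le_tail_mass_sup)
  have lower: "kt_norm \<Lambda> a r t x \<le> ennreal (2 powr (p / t) * (2 powr t - 1) powr (-1 / t)) * epowr \<gamma> (p / t)"
    unfolding kt \<gamma> using assms(4,5) nonneg(1) by (rule tail_mass_sup_le_truncated_moment_sup)
  have "x \<in> k_space \<Lambda> a r t \<longleftrightarrow> \<gamma> < \<infinity>"
    using less_top_if_le_mult_epowr[OF upper] less_top_if_le_mult_epowr[OF lower]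
    unfolding k_space_def by blast
  with upper lower show ?thesis by blast
qed

end
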